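(* Let $Q=(q_1,\dots,q_n)$ with $q_i\in\mathbb C\setminus\{0,1\}$ and $\Lambda=(\lambda_{ij})$ an $n\times n$ matrix over $\mathbb C\setminus\{0\}$ with $\lambda_{ii}=1$, $\lambda_{ij}=\lambda_{ji}^{-1}$, such that the group $G(Q,\Lambda)\subseteq\mathbb C^\times$ generated by all $q_i,\lambda_{ij}$ is torsion free; let $\eta_1,\dots,\eta_r$ be a basis of it, $\{\mu_1,\dots,\mu_r\}\subset\mathbb C$ a $\mathbb Q$-linearly independent set, and $d:G(Q,\Lambda)\to\mathbb C$ the homomorphism $d(\eta_1^{s_1}\cdots\eta_r^{s_r})=\sum_i s_i\mu_i$. Let $A_q$ be the $\mathbb C$-algebra generated by $y_1,x_1,\dots,y_n,x_n$ with relations, for $i<j$: $y_jy_i=\lambda_{ji}y_iy_j$, $y_jx_i=\lambda_{ij}x_iy_j$, $x_jy_i=q_i\lambda_{ij}y_ix_j$, $x_jx_i=q_i^{-1}\lambda_{ij}^{-1}x_ix_j$, and for all $i$: $x_iy_i-q_iy_ix_i=(q_i-1)(1+\sum_{k<i}y_kx_k)$. Let $A_1$ be the Poisson algebra $\mathbb C[y_1,x_1,\dots,y_n,x_n]$ with bracket, for $i<j$: $\{y_j,y_i\}=d(\lambda_{ji})y_iy_j$, $\{y_j,x_i\}=d(\lambda_{ij})x_iy_j$, $\{x_j,y_i\}=(d(q_i)+d(\lambda_{ij}))y_ix_j$, $\{x_j,x_i\}=-(d(q_i)+d(\lambda_{ij}))x_ix_j$, and for all $i$: $\{x_i,y_i\}=d(q_i)(1+\sum_{k\le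 i}y_kx_k)$. In both algebras put $z_i=1+\sum_{k=1}^iy_kx_k$ and $\mathcal M_n=\{z_1,z_2,y_2,x_2,z_3,y_3,x_3,\dots,z_n,y_n,x_n\}$. Call $T\subseteq\mathcal M_n$ admissible if for every $2\le i\le n$: ($y_i\in T$ or $x_i\in T$) if and only if ($z_i\in T$ and $z_{i-1}\in T$). Then: (1) for every prime ideal $P$ of $A_q$, $P\cap\mathcal M_n$ is admissible; (2) for every Poisson prime ideal $P$ of $A_1$, $P\cap\mathcal M_n$ is admissible.
   Context: A Poisson ideal $P$ of $A_1$ is an ideal with $\{P,A_1\}\subseteq P$; it is Poisson prime if for Poisson ideals $I,J$, $IJ\subseteq P$ implies $I\subseteq P$ or $J\subseteq P$. ($A_1$ coincides with the semiclassical limit $A/(t-1)A$ of a one-parameter deformation whose specialization is $A_q$.) *)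

theory Defs
  imports Complex_Main "HOL-Library.Poly_Mapping"
begin

datatype var = Y nat | X nat

fun vidx :: "var \<Rightarrow> nat" where
  "vidx (Y i) = i" | "vidx (X i) = i"

definition Vars :: "nat \<Rightarrow> var set" where
  "Vars n = Y ` {1..n} \<union> X ` {1..n}"

section \<open>The free associative algebra C<y_1,x_1,...,y_n,x_n>\<close>

type_synonym ncpoly = "var list \<Rightarrow>\<^sub>0 complex"

definition ncR :: "nat \<Rightarrow> ncpoly set" where
  "ncR n = {f. \<forall>w\<in>Poly_Mapping.keys f. \<forall>v\<in>set w. vidx v \<in> {1..n}}"

definition fmul :: "ncpoly \<Rightarrow> ncpoly \<Rightarrow> ncpoly" where
  "fmul f g = (\<Sum>u\<in>Poly_Mapping.keys f. \<Sum>v\<in>Poly_Mapping.keys g. Poly_Mapping.single (u @ v) (Poly_Mapping.lookup f u * Poly_Mapping.lookup g v))"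

definition ncgen :: "var \<Rightarrow> ncpoly" where
  "ncgen v = Poly_Mapping.single [v] 1"

definition ncconst :: "complex \<Rightarrow> ncpoly" where
  "ncconst c = Poly_Mapping.single [] c"

definition ncz :: "nat \<Rightarrow> ncpoly" where
  "ncz i = ncconst 1 + (\<Sum>k\<in>{1..i}. fmul (ncgen (Y k)) (ncgen (X k)))"

text \<open>Defining relators of A_q (left side minus right side).\<close>
definition Aq_rels :: "nat \<Rightarrow> (nat \<Rightarrow> complex) \<Rightarrow> (nat \<Rightarrow> nat \<Rightarrow> complex) \<Rightarrow> ncpoly set" where
  "Aq_rels n q lam =
     {fmul (ncgen (Y j)) (ncgen (Y i)) - fmul (ncconst (lam j i)) (fmul (ncgen (Y i)) (ncgen (Y j)))
        | i j. 1 \<le> i \<and> i < j \<and> j \<le> n}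
   \<union> {fmul (ncgen (Y j)) (ncgen (X i)) - fmul (ncconst (lam i j)) (fmul (ncgen (X i)) (ncgen (Y j)))
        | i j. 1 \<le> i \<and> i < j \<and> j \<le> n}
   \<union> {fmul (ncgen (X j)) (ncgen (Y i)) - fmul (ncconst (q i * lam i j)) (fmul (ncgen (Y i)) (ncgen (X j)))
        | i j. 1 \<le> i \<and> i < j \<and> j \<le> n}
   \<union> {fmul (ncgen (X j)) (ncgen (X i))
          - fmul (ncconst (inverse (q i) * inverse (lam i j))) (fmul (ncgen (X i)) (ncgen (X j)))
        | i j. 1 \<le> i \<and> i < j \<and> j \<le> n}
   \<union> {fmul (ncgen (X i)) (ncgen (Y i)) - fmul (ncconst (q i)) (fmul (ncgen (Y i)) (ncgen (X i)))
          - fmul (ncconst (q i - 1))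
              (ncconst 1 + (\<Sum>k\<in>{1..<i}. fmul (ncgen (Y k)) (ncgen (X k))))
        | i. 1 \<le> i \<and> i \<le> n}"

definition nc_ideal :: "nat \<Rightarrow> ncpoly set \<Rightarrow> bool" where
  "nc_ideal n I \<longleftrightarrow> I \<subseteq> ncR n \<and> 0 \<in> I \<and> (\<forall>a\<in>I. \<forall>b\<in>I. a + b \<in> I) \<and> (\<forall>a\<in>I. - a \<in> I)
     \<and> (\<forall>r\<in>ncR n. \<forall>a\<in>I. fmul r a \<in> I \<and> fmul a r \<in> I)"

text \<open>Prime ideals of A_q = (free algebra)/(relators), described via the
  correspondence between ideals of A_q and ideals of the free algebra that
  contain the relators: P/K is prime in A_q.\<close>
definition Aq_prime :: "nat \<Rightarrow> (nat \<Rightarrow> complex) \<Rightarrow> (nat \<Rightarrow> nat \<Rightarrow> complex) \<Rightarrow> ncpoly set \<Rightarrow> bool" where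
  "Aq_prime n q lam P \<longleftrightarrow>
     nc_ideal n P \<and> Aq_rels n q lam \<subseteq> P \<and> P \<noteq> ncR n \<and>
     (\<forall>I J. nc_ideal n I \<and> Aq_rels n q lam \<subseteq> I \<and> nc_ideal n J \<and> Aq_rels n q lam \<subseteq> J \<longrightarrow>
        (\<forall>a\<in>I. \<forall>b\<in>J. fmul a b \<in> P) \<longrightarrow> I \<subseteq> P \<or> J \<subseteq> P)"

section \<open>The commutative polynomial ring C[y_1,x_1,...,y_n,x_n] with Poisson bracket\<close>

type_synonym cpoly = "(var \<Rightarrow>\<^sub>0 nat) \<Rightarrow>\<^sub>0 complex"

definition cR :: "nat \<Rightarrow> cpoly set" where
  "cR n = {f. \<forall>m\<in>Poly_Mapping.keys f. \<forall>v\<in>Poly_Mapping.keys m. vidx v \<in> {1..n}}"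

definition cvar :: "var \<Rightarrow> cpoly" where
  "cvar v = Poly_Mapping.single (Poly_Mapping.single v 1) 1"

definition cconst :: "complex \<Rightarrow> cpoly" where
  "cconst c = Poly_Mapping.single 0 c"

definition pd :: "var \<Rightarrow> cpoly \<Rightarrow> cpoly" where
  "pd v f = (\<Sum>m\<in>Poly_Mapping.keys f. Poly_Mapping.single (m - Poly_Mapping.single v 1)
                              (Poly_Mapping.lookup f m * of_nat (Poly_Mapping.lookup m v)))"

definition cz :: "nat \<Rightarrow> cpoly" where
  "cz i = 1 + (\<Sum>k\<in>{1..i}. cvar (Y k) * cvar (X k))"

text \<open>Brackets of generators {a,b} in A_1 (extended by antisymmetry).\<close>
fun gb :: "(nat \<Rightarrow> complex) \<Rightarrow> (nat \<Rightarrow> nat \<Rightarrow> complex) \<Rightarrow> (complex \<Rightarrow> complex)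
           \<Rightarrow> var \<Rightarrow> var \<Rightarrow> cpoly" where
  "gb q lam d (Y j) (Y i) =
     (if i < j then cconst (d (lam j i)) * cvar (Y i) * cvar (Y j)
      else if j < i then - (cconst (d (lam i j)) * cvar (Y j) * cvar (Y i))
      else 0)"
| "gb q lam d (Y j) (X i) =
     (if i < j then cconst (d (lam i j)) * cvar (X i) * cvar (Y j)
      else if j < i then - (cconst (d (q j) + d (lam j i)) * cvar (Y j) * cvar (X i))
      else - (cconst (d (q i)) * (1 + (\<Sum>k\<in>{1..i}. cvar (Y k) * cvar (X k)))))"
| "gb q lam d (X j) (Y i) =
     (if i < j then cconst (d (q i) + d (lam i j)) * cvar (Y i) * cvar (X j)
      else if j < i then - (cconst (d (lam j i)) * cvar (X j) * cvar (Y i))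
      else cconst (d (q i)) * (1 + (\<Sum>k\<in>{1..i}. cvar (Y k) * cvar (X k))))"
| "gb q lam d (X j) (X i) =
     (if i < j then - (cconst (d (q i) + d (lam i j)) * cvar (X i) * cvar (X j))
      else if j < i then cconst (d (q j) + d (lam j i)) * cvar (X j) * cvar (X i)
      else 0)"

text \<open>The Poisson bracket: the unique biderivation with the given values on generators.\<close>
definition pbr :: "nat \<Rightarrow> (nat \<Rightarrow> complex) \<Rightarrow> (nat \<Rightarrow> nat \<Rightarrow> complex) \<Rightarrow> (complex \<Rightarrow> complex)
                   \<Rightarrow> cpoly \<Rightarrow> cpoly \<Rightarrow> cpoly" where
  "pbr n q lam d f g = (\<Sum>a\<in>Vars n. \<Sum>b\<in>Vars n. pd a f * pd b g * gb q lam d a b)"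

definition c_ideal :: "nat \<Rightarrow> cpoly set \<Rightarrow> bool" where
  "c_ideal n I \<longleftrightarrow> I \<subseteq> cR n \<and> 0 \<in> I \<and> (\<forall>a\<in>I. \<forall>b\<in>I. a + b \<in> I) \<and> (\<forall>a\<in>I. - a \<in> I)
     \<and> (\<forall>r\<in>cR n. \<forall>a\<in>I. r * a \<in> I)"

definition poisson_ideal :: "nat \<Rightarrow> (nat \<Rightarrow> complex) \<Rightarrow> (nat \<Rightarrow> nat \<Rightarrow> complex) \<Rightarrow> (complex \<Rightarrow> complex)
                             \<Rightarrow> cpoly set \<Rightarrow> bool" where
  "poisson_ideal n q lam d I \<longleftrightarrow> c_ideal n I \<and> (\<forall>a\<in>I. \<forall>f\<in>cR n. pbr n q lam d a f \<in> I)"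

definition poisson_prime :: "nat \<Rightarrow> (nat \<Rightarrow> complex) \<Rightarrow> (nat \<Rightarrow> nat \<Rightarrow> complex) \<Rightarrow> (complex \<Rightarrow> complex)
                             \<Rightarrow> cpoly set \<Rightarrow> bool" where
  "poisson_prime n q lam d P \<longleftrightarrow> poisson_ideal n q lam d P \<and>
     (\<forall>I J. poisson_ideal n q lam d I \<and> poisson_ideal n q lam d J \<longrightarrow>
        (\<forall>a\<in>I. \<forall>b\<in>J. a * b \<in> P) \<longrightarrow> I \<subseteq> P \<or> J \<subseteq> P)"

datatype mel = MZ nat | MY nat | MX nat

definition Mn :: "nat \<Rightarrow> mel set" where
  "Mn n = {MZ 1} \<union> MZ ` {2..n} \<union> MY ` {2..n} \<union> MX ` {2..n}"

definition admissible :: "nat \<Rightarrow> mel set \<Rightarrow> bool" where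
  "admissible n T \<longleftrightarrow> T \<subseteq> Mn n \<and>
     (\<forall>i\<in>{2..n}. (MY i \<in> T \<or> MX i \<in> T) \<longleftrightarrow> (MZ i \<in> T \<and> MZ (i - 1) \<in> T))"

fun ncelem :: "mel \<Rightarrow> ncpoly" where
  "ncelem (MZ i) = ncz i" | "ncelem (MY i) = ncgen (Y i)" | "ncelem (MX i) = ncgen (X i)"

fun celem :: "mel \<Rightarrow> cpoly" where
  "celem (MZ i) = cz i" | "celem (MY i) = cvar (Y i)" | "celem (MX i) = cvar (X i)"

text \<open>P \<inter> M_n, viewing M_n as a set of elements of the algebra.\<close>
definition nc_trace :: "nat \<Rightarrow> ncpoly set \<Rightarrow> mel set" where
  "nc_trace n P = {m \<in> Mn n. ncelem m \<in> P}"

definition c_trace :: "nat \<Rightarrow> cpoly set \<Rightarrow> mel set" where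
  "c_trace n P = {m \<in> Mn n. celem m \<in> P}"

inductive_set grp_gen :: "complex set \<Rightarrow> complex set" for S where
  gen: "s \<in> S \<Longrightarrow> s \<in> grp_gen S"
| one: "1 \<in> grp_gen S"
| mult: "a \<in> grp_gen S \<Longrightarrow> b \<in> grp_gen S \<Longrightarrow> a * b \<in> grp_gen S"
| inv: "a \<in> grp_gen S \<Longrightarrow> inverse a \<in> grp_gen S"

definition GQL :: "nat \<Rightarrow> (nat \<Rightarrow> complex) \<Rightarrow> (nat \<Rightarrow> nat \<Rightarrow> complex) \<Rightarrow> complex set" where
  "GQL n q lam = grp_gen (q ` {1..n} \<union> {lam i j | i j. i \<in> {1..n} \<and> j \<in> {1..n}})"

end

theory Submission
  imports Defs
begin

text \<open>
  Since z_i = z_(i-1) + y_i x_i, the claim is that y_i or x_i lies in P iff z_i and z_(i-1) do.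
  If y_i or x_i lies in P, the relation x_i y_i - q_i y_i x_i = (q_i - 1) z_(i-1) of A_q, resp.
  the bracket {x_i, y_i} = d(q_i) z_i of A_1, puts z_(i-1) and z_i into P; this needs q_i \<noteq> 1
  and d(q_i) \<noteq> 0, the latter because the \<mu>_k are linearly independent over \<rat>, so d vanishes
  only at 1. Conversely, if z_i, z_(i-1) \<in> P then y_i x_i \<in> P. In A_q every generator then
  q-commutes with x_i modulo P, so y_i A_q x_i \<subseteq> P and primality gives y_i \<in> P or x_i \<in> P.
  In A_1 the ideals P + (y_i) and P + (x_i) are Poisson: the bracket of y_i with a generator
  other than x_i is a multiple of y_i, while {y_i, x_i} = -d(q_i) z_i \<in> P, and symmetrically
  for x_i. Their product lies in P + (y_i x_i) = P, and Poisson primality concludes.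
\<close>

lemma poly_mapping_sum_single_lookup:
  "(\<Sum>k\<in>Poly_Mapping.keys f. Poly_Mapping.single k (Poly_Mapping.lookup f k)) = f"
  by (rule poly_mapping_eqI) (auto simp: lookup_sum lookup_single when_def in_keys_iff)

lemma poly_mapping_keys_induct [consumes 1, case_names zero single add]:
  fixes f :: "'a \<Rightarrow>\<^sub>0 'b::comm_monoid_add"
  assumes "Poly_Mapping.keys f \<subseteq> S" and "P 0"
    and "\<And>k c. k \<in> S \<Longrightarrow> P (Poly_Mapping.single k c)"
    and "\<And>a b. P a \<Longrightarrow> P b \<Longrightarrow> P (a + b)"
  shows "P f"
proof -
  have "P (\<Sum>k\<in>K. Poly_Mapping.single k (Poly_Mapping.lookup f k))" if "K \<subseteq> Poly_Mapping.keys f" for K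
    using finite_subset[OF that finite_keys] that by (induction K rule: finite_induct) (use assms in auto)
  then show ?thesis
    using poly_mapping_sum_single_lookup[of f] by force
qed

lemma poly_mapping_induct [case_names zero single add]:
  fixes f :: "'a \<Rightarrow>\<^sub>0 'b::comm_monoid_add"
  assumes "P 0" "\<And>k c. P (Poly_Mapping.single k c)" "\<And>a b. P a \<Longrightarrow> P b \<Longrightarrow> P (a + b)"
  shows "P f"
  using subset_refl by (rule poly_mapping_keys_induct) (use assms in auto)

section \<open>The free algebra and its ideals\<close>

(* Words form a monoid under concatenation, which makes ncpoly the monoid algebra of the free
   monoid; its product is fmul. *)
instantiation list :: (type) monoid_add
begin
definition zero_list_def: "(0::'a list) = []"
definition plus_list_def: "(xs::'a list) + ys = xs @ ys"
instance by standard (auto simp: zero_list_def plus_list_def)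
end

lemma fmul_eq_times: "fmul f g = f * g"
proof -
  have "f * g = (\<Sum>u\<in>Poly_Mapping.keys f. Poly_Mapping.single u (Poly_Mapping.lookup f u))
              * (\<Sum>v\<in>Poly_Mapping.keys g. Poly_Mapping.single v (Poly_Mapping.lookup g v))"
    by (simp only: poly_mapping_sum_single_lookup)
  then show ?thesis
    by (simp add: fmul_def sum_distrib_left sum_distrib_right mult_single plus_list_def
        sum.swap[of _ "Poly_Mapping.keys g"])
qed

lemma ncconst_eq_single: "ncconst c = Poly_Mapping.single 0 c"
  by (simp add: ncconst_def zero_list_def)

lemma ncconst_times: "ncconst a * ncconst b = ncconst (a * b)"
  by (simp add: ncconst_eq_single mult_single)

lemma ncconst_1: "ncconst 1 = 1"
  by (simp add: ncconst_eq_single)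

lemma ncconst_commute: "ncconst c * f = f * ncconst c"
  by (induction f rule: poly_mapping_induct)
    (simp_all add: ncconst_eq_single mult_single distrib_left distrib_right mult.commute)

lemma ncconst_cancel: "c \<noteq> 0 \<Longrightarrow> ncconst (inverse c) * (ncconst c * f) = f"
  by (simp add: mult.assoc[symmetric] ncconst_times ncconst_1)

lemma single_Cons_eq_ncgen_times: "Poly_Mapping.single (v # w) c = ncgen v * Poly_Mapping.single w c"
  by (simp add: ncgen_def mult_single plus_list_def)

lemma ncR_single: "\<forall>v\<in>set w. vidx v \<in> {1..n} \<Longrightarrow> Poly_Mapping.single w c \<in> ncR n"
  unfolding ncR_def by auto

lemma ncR_ncgen: "vidx v \<in> {1..n} \<Longrightarrow> ncgen v \<in> ncR n"
  unfolding ncgen_def by (rule ncR_single) simp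

lemma ncR_ncconst: "ncconst c \<in> ncR n"
  unfolding ncconst_def by (rule ncR_single) simp

lemma ncR_1: "1 \<in> ncR n"
  using ncR_ncconst[of 1] by (simp add: ncconst_1)

lemma ncR_add: "f \<in> ncR n \<Longrightarrow> g \<in> ncR n \<Longrightarrow> f + g \<in> ncR n"
  unfolding ncR_def using keys_add[of f g] by auto

lemma ncR_uminus: "f \<in> ncR n \<Longrightarrow> - f \<in> ncR n"
  unfolding ncR_def by (simp add: keys_minus)

lemma ncR_times: "f \<in> ncR n \<Longrightarrow> g \<in> ncR n \<Longrightarrow> f * g \<in> ncR n"
  unfolding ncR_def using keys_mult[of f g] by (fastforce simp: plus_list_def)

lemma nc_idealD:
  assumes "nc_ideal n I"
  shows nc_ideal_subset: "I \<subseteq> ncR n"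
    and nc_ideal_0: "0 \<in> I"
    and nc_ideal_add: "a \<in> I \<Longrightarrow> b \<in> I \<Longrightarrow> a + b \<in> I"
    and nc_ideal_uminus: "a \<in> I \<Longrightarrow> - a \<in> I"
    and nc_ideal_left: "r \<in> ncR n \<Longrightarrow> a \<in> I \<Longrightarrow> r * a \<in> I"
    and nc_ideal_right: "r \<in> ncR n \<Longrightarrow> a \<in> I \<Longrightarrow> a * r \<in> I"
  using assms unfolding nc_ideal_def fmul_eq_times by blast+

lemma nc_ideal_diff: "nc_ideal n I \<Longrightarrow> a \<in> I \<Longrightarrow> b \<in> I \<Longrightarrow> a - b \<in> I"
  by (metis diff_conv_add_uminus nc_ideal_add nc_ideal_uminus)

lemma nc_ideal_ncconst: "nc_ideal n I \<Longrightarrow> a \<in> I \<Longrightarrow> ncconst c * a \<in> I"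
  by (rule nc_ideal_left[OF _ ncR_ncconst])

lemma nc_ideal_ncconst_cancel: "nc_ideal n I \<Longrightarrow> c \<noteq> 0 \<Longrightarrow> ncconst c * a \<in> I \<Longrightarrow> a \<in> I"
  using nc_ideal_ncconst[of n I "ncconst c * a" "inverse c"] by (simp add: ncconst_cancel)

lemma nc_ideal_swap:
  assumes "nc_ideal n I" "c \<noteq> 0" "u * v - ncconst c * (v * u) \<in> I"
  shows "v * u - ncconst (inverse c) * (u * v) \<in> I"
proof -
  have "v * u - ncconst (inverse c) * (u * v) = - (ncconst (inverse c) * (u * v - ncconst c * (v * u)))"
    using assms(2) by (simp add: right_diff_distrib ncconst_cancel)
  then show ?thesis
    using assms nc_ideal_uminus nc_ideal_ncconst by metis
qed

lemma nc_ideal_sandwich_annihilator: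
  assumes P: "nc_ideal n P" and b: "b \<in> ncR n"
  shows "nc_ideal n {a \<in> ncR n. \<forall>r\<in>ncR n. a * r * b \<in> P}" (is "nc_ideal n ?A")
  unfolding nc_ideal_def fmul_eq_times
proof (intro conjI ballI)
  show "0 \<in> ?A"
    using nc_ideal_0[OF P] by (simp add: ncR_def)
next
  fix a c assume "a \<in> ?A" "c \<in> ?A"
  then show "a + c \<in> ?A"
    using nc_ideal_add[OF P] by (simp add: distrib_right ncR_add)
next
  fix a assume "a \<in> ?A"
  then show "- a \<in> ?A"
    using nc_ideal_uminus[OF P] by (simp add: ncR_uminus)
next
  fix r a assume r: "r \<in> ncR n" and a: "a \<in> ?A"
  have "r * a * s * b \<in> P" if "s \<in> ncR n" for s
    using nc_ideal_left[OF P r, of "a * s * b"] a that by (simp add: mult.assoc)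
  then show "r * a \<in> ?A"
    using r a by (simp add: ncR_times)
  have "a * r * s * b \<in> P" if "s \<in> ncR n" for s
    using a ncR_times[OF r that] mult.assoc[of a r s] by auto
  then show "a * r \<in> ?A"
    using r a by (simp add: ncR_times)
qed blast

lemma nc_ideal_right_annihilator:
  assumes P: "nc_ideal n P" and I: "nc_ideal n I"
  shows "nc_ideal n {c \<in> ncR n. \<forall>a\<in>I. a * c \<in> P}" (is "nc_ideal n ?A")
  unfolding nc_ideal_def fmul_eq_times
proof (intro conjI ballI)
  show "0 \<in> ?A"
    using nc_ideal_0[OF P] by (simp add: ncR_def)
next
  fix c c' assume "c \<in> ?A" "c' \<in> ?A"
  then show "c + c' \<in> ?A"
    using nc_ideal_add[OF P] by (simp add: distrib_left ncR_add)
next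
  fix c assume "c \<in> ?A"
  then show "- c \<in> ?A"
    using nc_ideal_uminus[OF P] by (simp add: ncR_uminus)
next
  fix r c assume r: "r \<in> ncR n" and c: "c \<in> ?A"
  have "a * (r * c) \<in> P" if "a \<in> I" for a
    using c nc_ideal_right[OF I r that] by (simp add: mult.assoc[symmetric])
  then show "r * c \<in> ?A"
    using r c by (simp add: ncR_times)
  have "a * (c * r) \<in> P" if "a \<in> I" for a
    using c nc_ideal_right[OF P r, of "a * c"] that by (simp add: mult.assoc)
  then show "c * r \<in> ?A"
    using r c by (simp add: ncR_times)
qed blast

section \<open>Prime ideals of A_q\<close>

lemma Aq_prime_sandwich:
  assumes P: "Aq_prime n q lam P" and a: "a \<in> ncR n" and b: "b \<in> ncR n"
    and aRb: "\<forall>r\<in>ncR n. a * r * b \<in> P"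
  shows "a \<in> P \<or> b \<in> P"
proof -
  define I where "I = {a \<in> ncR n. \<forall>r\<in>ncR n. a * r * b \<in> P}"
  define J where "J = {c \<in> ncR n. \<forall>a\<in>I. a * c \<in> P}"
  have ideal_P: "nc_ideal n P" and rels_P: "Aq_rels n q lam \<subseteq> P"
    using P unfolding Aq_prime_def by blast+
  have ideal_I: "nc_ideal n I"
    unfolding I_def using nc_ideal_sandwich_annihilator[OF ideal_P b] .
  have ideal_J: "nc_ideal n J"
    unfolding J_def using nc_ideal_right_annihilator[OF ideal_P ideal_I] .
  have "P \<subseteq> I"
  proof
    fix p assume p: "p \<in> P"
    have "p * r * b \<in> P" if "r \<in> ncR n" for r
      using nc_ideal_right[OF ideal_P b nc_ideal_right[OF ideal_P that p]] .
    then show "p \<in> I"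
      unfolding I_def using p nc_ideal_subset[OF ideal_P] by blast
  qed
  moreover have "P \<subseteq> J"
    unfolding J_def using nc_ideal_left[OF ideal_P] nc_ideal_subset[OF ideal_P]
      nc_ideal_subset[OF ideal_I] by blast
  moreover have "\<forall>a\<in>I. \<forall>c\<in>J. fmul a c \<in> P"
    unfolding J_def fmul_eq_times by blast
  ultimately have "I \<subseteq> P \<or> J \<subseteq> P"
    using P ideal_I ideal_J rels_P unfolding Aq_prime_def by blast
  moreover have "a \<in> I"
    unfolding I_def using a aRb by blast
  moreover have "b \<in> J"
    unfolding J_def I_def using b ncR_1 by force
  ultimately show ?thesis by blast
qed

lemma Aq_rels_memD:
  assumes "Aq_rels n q lam \<subseteq> P" and "1 \<le> i" "i < j" "j \<le> n"
  shows Aq_rel_YX: "ncgen (Y j) * ncgen (X i) - ncconst (lam i j) * (ncgen (X i) * ncgen (Y j)) \<in> P"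
    and Aq_rel_XY: "ncgen (X j) * ncgen (Y i) - ncconst (q i * lam i j) * (ncgen (Y i) * ncgen (X j)) \<in> P"
    and Aq_rel_XX: "ncgen (X j) * ncgen (X i)
                      - ncconst (inverse (q i) * inverse (lam i j)) * (ncgen (X i) * ncgen (X j)) \<in> P"
proof -
  note rels = assms(1)[unfolded Aq_rels_def fmul_eq_times Un_subset_iff]
  show "ncgen (Y j) * ncgen (X i) - ncconst (lam i j) * (ncgen (X i) * ncgen (Y j)) \<in> P"
    using rels assms(2-4) by blast
  show "ncgen (X j) * ncgen (Y i) - ncconst (q i * lam i j) * (ncgen (Y i) * ncgen (X j)) \<in> P"
    using rels assms(2-4) by blast
  show "ncgen (X j) * ncgen (X i)
          - ncconst (inverse (q i) * inverse (lam i j)) * (ncgen (X i) * ncgen (X j)) \<in> P"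
    using rels assms(2-4) by blast
qed

lemma Aq_rel_diag:
  assumes "Aq_rels n q lam \<subseteq> P" and "1 \<le> i" "i \<le> n"
  shows "ncgen (X i) * ncgen (Y i) - ncconst (q i) * (ncgen (Y i) * ncgen (X i))
           - ncconst (q i - 1) * ncz (i - 1) \<in> P"
proof -
  have "{1..<i} = {1..i - 1}"
    using assms(2) by auto
  then have "ncz (i - 1) = ncconst 1 + (\<Sum>k\<in>{1..<i}. ncgen (Y k) * ncgen (X k))"
    unfolding ncz_def fmul_eq_times by simp
  then show ?thesis
    using assms(1)[unfolded Aq_rels_def fmul_eq_times Un_subset_iff] assms(2,3) by auto
qed

lemma ncz_eq: "1 \<le> i \<Longrightarrow> ncz i = ncz (i - 1) + ncgen (Y i) * ncgen (X i)"
  unfolding ncz_def fmul_eq_times by (cases i) (simp_all add: add.assoc)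

definition nc_normal_modulo :: "nat \<Rightarrow> ncpoly set \<Rightarrow> ncpoly \<Rightarrow> bool" where
  "nc_normal_modulo n P x \<longleftrightarrow>
     (\<forall>v. vidx v \<in> {1..n} \<longrightarrow> (\<exists>c. ncgen v * x - ncconst c * (x * ncgen v) \<in> P))"

lemma nc_normal_modulo_times_ncgen:
  assumes P: "nc_ideal n P" and x: "nc_normal_modulo n P x" and v: "vidx v \<in> {1..n}"
    and a: "a \<in> ncR n" and ax: "a * x \<in> P"
  shows "a * ncgen v * x \<in> P"
proof -
  obtain c where c: "ncgen v * x - ncconst c * (x * ncgen v) \<in> P"
    using x v unfolding nc_normal_modulo_def by blast
  have "a * ncgen v * x = a * (ncgen v * x - ncconst c * (x * ncgen v)) + ncconst c * (a * x * ncgen v)"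
    by (simp add: algebra_simps ncconst_commute)
  also have "\<dots> \<in> P"
    using nc_ideal_left[OF P a c] nc_ideal_right[OF P ncR_ncgen[OF v] ax]
    by (intro nc_ideal_add[OF P] nc_ideal_ncconst[OF P])
  finally show ?thesis .
qed

lemma nc_normal_modulo_sandwich:
  assumes P: "nc_ideal n P" and x: "nc_normal_modulo n P x"
    and a: "a \<in> ncR n" and ax: "a * x \<in> P" and b: "b \<in> ncR n"
  shows "a * b * x \<in> P"
proof -
  have word: "a * Poly_Mapping.single w c * x \<in> P"
    if "\<forall>v\<in>set w. vidx v \<in> {1..n}" "a \<in> ncR n" "a * x \<in> P" for w c a
    using that
  proof (induction w arbitrary: a)
    case Nil
    then show ?case
      using nc_ideal_ncconst[OF P Nil(3), of c]
      by (simp add: mult.assoc flip: ncconst_def ncconst_commute)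
  next
    case (Cons v w)
    have "a * ncgen v \<in> ncR n" "a * ncgen v * x \<in> P"
      using Cons.prems ncR_times ncR_ncgen nc_normal_modulo_times_ncgen[OF P x] by auto
    with Cons have "a * ncgen v * Poly_Mapping.single w c * x \<in> P"
      by simp
    then show ?case
      by (simp add: single_Cons_eq_ncgen_times mult.assoc)
  qed
  from b have "Poly_Mapping.keys b \<subseteq> {w. \<forall>v\<in>set w. vidx v \<in> {1..n}}"
    unfolding ncR_def by blast
  then show ?thesis
  proof (induction b rule: poly_mapping_keys_induct)
    case (add b b')
    then show ?case by (simp add: distrib_left distrib_right nc_ideal_add[OF P])
  qed (use word a ax nc_ideal_0[OF P] in auto)
qed

lemma Aq_prime_X_normal:
  assumes P: "Aq_prime n q lam P"
    and q_ok: "\<forall>i\<in>{1..n}. q i \<noteq> 0 \<and> q i \<noteq> 1"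
    and lam_nz: "\<forall>i\<in>{1..n}. \<forall>j\<in>{1..n}. lam i j \<noteq> 0"
    and i: "i \<in> {1..n}" and yx: "ncgen (Y i) * ncgen (X i) \<in> P"
  shows "nc_normal_modulo n P (ncgen (X i))"
  unfolding nc_normal_modulo_def
proof (intro allI impI)
  fix v assume v: "vidx v \<in> {1..n}"
  have ideal_P: "nc_ideal n P" and rels: "Aq_rels n q lam \<subseteq> P"
    using P unfolding Aq_prime_def by blast+
  let ?x = "ncgen (X i)"
  show "\<exists>c. ncgen v * ?x - ncconst c * (?x * ncgen v) \<in> P"
  proof (cases v)
    case (Y j)
    consider "i < j" | "j < i" | "j = i" by linarith
    then show ?thesis
    proof cases
      case 1
      then show ?thesis using Aq_rel_YX[OF rels] i v Y by auto
    next
      case 2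
      then have "q j * lam j i \<noteq> 0"
        using q_ok lam_nz i v Y by auto
      then show ?thesis
        using nc_ideal_swap[OF ideal_P _ Aq_rel_XY[OF rels, of j i]] 2 i v Y by auto
    next
      case 3
      then show ?thesis
        using yx Y by (intro exI[of _ 0]) (simp add: ncconst_eq_single)
    qed
  next
    case (X j)
    consider "i < j" | "j < i" | "j = i" by linarith
    then show ?thesis
    proof cases
      case 1
      then show ?thesis using Aq_rel_XX[OF rels] i v X by auto
    next
      case 2
      then have "inverse (q j) * inverse (lam j i) \<noteq> 0"
        using q_ok lam_nz i v X by auto
      then show ?thesis
        using nc_ideal_swap[OF ideal_P _ Aq_rel_XX[OF rels, of j i]] 2 i v X by auto
    next
      case 3
      then show ?thesis
        using nc_ideal_0[OF ideal_P] X by (intro exI[of _ 1]) (simp add: ncconst_1)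
    qed
  qed
qed

lemma Aq_prime_gen_iff_ncz:
  assumes P: "Aq_prime n q lam P"
    and q_ok: "\<forall>i\<in>{1..n}. q i \<noteq> 0 \<and> q i \<noteq> 1"
    and lam_nz: "\<forall>i\<in>{1..n}. \<forall>j\<in>{1..n}. lam i j \<noteq> 0"
    and i: "i \<in> {1..n}"
  shows "ncgen (Y i) \<in> P \<or> ncgen (X i) \<in> P \<longleftrightarrow> ncz i \<in> P \<and> ncz (i - 1) \<in> P"
proof -
  have ideal_P: "nc_ideal n P" and rels: "Aq_rels n q lam \<subseteq> P"
    using P unfolding Aq_prime_def by blast+
  have y: "ncgen (Y i) \<in> ncR n" and x: "ncgen (X i) \<in> ncR n"
    using i by (simp_all add: ncR_ncgen)
  have z: "ncz i = ncz (i - 1) + ncgen (Y i) * ncgen (X i)"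
    using i by (simp add: ncz_eq)
  have rel: "ncgen (X i) * ncgen (Y i) - ncconst (q i) * (ncgen (Y i) * ncgen (X i))
               - ncconst (q i - 1) * ncz (i - 1) \<in> P"
    using Aq_rel_diag[OF rels] i by simp
  show ?thesis
  proof
    assume "ncgen (Y i) \<in> P \<or> ncgen (X i) \<in> P"
    then have yx: "ncgen (Y i) * ncgen (X i) \<in> P" and xy: "ncgen (X i) * ncgen (Y i) \<in> P"
      using nc_ideal_left[OF ideal_P] nc_ideal_right[OF ideal_P] x y by blast+
    have "ncconst (q i - 1) * ncz (i - 1)
            = ncgen (X i) * ncgen (Y i) - ncconst (q i) * (ncgen (Y i) * ncgen (X i))
              - (ncgen (X i) * ncgen (Y i) - ncconst (q i) * (ncgen (Y i) * ncgen (X i))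
                 - ncconst (q i - 1) * ncz (i - 1))"
      by simp
    also have "\<dots> \<in> P"
      using nc_ideal_diff[OF ideal_P xy nc_ideal_ncconst[OF ideal_P yx]] rel
      by (rule nc_ideal_diff[OF ideal_P])
    finally have "ncz (i - 1) \<in> P"
      using q_ok i by (elim nc_ideal_ncconst_cancel[OF ideal_P, rotated]) auto
    then show "ncz i \<in> P \<and> ncz (i - 1) \<in> P"
      using z yx nc_ideal_add[OF ideal_P] by simp
  next
    assume "ncz i \<in> P \<and> ncz (i - 1) \<in> P"
    then have yx: "ncgen (Y i) * ncgen (X i) \<in> P"
      using z nc_ideal_diff[OF ideal_P, of "ncz i" "ncz (i - 1)"] by simp
    have "nc_normal_modulo n P (ncgen (X i))"
      using Aq_prime_X_normal[OF P q_ok lam_nz i yx] .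
    then have "\<forall>r\<in>ncR n. ncgen (Y i) * r * ncgen (X i) \<in> P"
      using nc_normal_modulo_sandwich[OF ideal_P _ y yx] by blast
    then show "ncgen (Y i) \<in> P \<or> ncgen (X i) \<in> P"
      using Aq_prime_sandwich[OF P y x] by blast
  qed
qed

lemma admissible_traceI:
  assumes "\<And>i. i \<in> {2..n} \<Longrightarrow>
             e (MY i) \<in> P \<or> e (MX i) \<in> P \<longleftrightarrow> e (MZ i) \<in> P \<and> e (MZ (i - 1)) \<in> P"
  shows "admissible n {m \<in> Mn n. e m \<in> P}"
  unfolding admissible_def
proof (intro conjI ballI)
  fix i assume i: "i \<in> {2..n}"
  then have "MY i \<in> Mn n" "MX i \<in> Mn n" "MZ i \<in> Mn n" "MZ (i - 1) \<in> Mn n"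
    unfolding Mn_def by (auto simp: image_iff intro: bexI[of _ "i - 1"])
  then show "MY i \<in> {m \<in> Mn n. e m \<in> P} \<or> MX i \<in> {m \<in> Mn n. e m \<in> P}
         \<longleftrightarrow> MZ i \<in> {m \<in> Mn n. e m \<in> P} \<and> MZ (i - 1) \<in> {m \<in> Mn n. e m \<in> P}"
    using assms[OF i] by simp
qed blast

lemma Aq_prime_trace_admissible:
  assumes "Aq_prime n q lam P"
    and "\<forall>i\<in>{1..n}. q i \<noteq> 0 \<and> q i \<noteq> 1"
    and "\<forall>i\<in>{1..n}. \<forall>j\<in>{1..n}. lam i j \<noteq> 0"
  shows "admissible n (nc_trace n P)"
  unfolding nc_trace_def
  by (rule admissible_traceI) (use Aq_prime_gen_iff_ncz[OF assms] in auto)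

section \<open>The Poisson algebra A_1\<close>

lemma pd_superset:
  assumes "finite S" "Poly_Mapping.keys f \<subseteq> S"
  shows "pd v f = (\<Sum>m\<in>S. Poly_Mapping.single (m - Poly_Mapping.single v 1)
                               (Poly_Mapping.lookup f m * of_nat (Poly_Mapping.lookup m v)))"
  unfolding pd_def by (rule sum.mono_neutral_left[OF assms]) (auto simp: in_keys_iff)

lemma pd_add: "pd v (f + g) = pd v f + pd v g"
proof -
  let ?S = "Poly_Mapping.keys f \<union> Poly_Mapping.keys g \<union> Poly_Mapping.keys (f + g)"
  have S: "finite ?S" by simp
  have "Poly_Mapping.keys f \<subseteq> ?S" "Poly_Mapping.keys g \<subseteq> ?S" "Poly_Mapping.keys (f + g) \<subseteq> ?S"
    by auto
  then show ?thesis
    by (simp add: pd_superset[OF S] lookup_add distrib_right single_add sum.distrib)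
qed

lemma pd_0: "pd v 0 = 0"
  by (simp add: pd_def)

lemma pd_single:
  "pd v (Poly_Mapping.single m a)
     = Poly_Mapping.single (m - Poly_Mapping.single v 1) (a * of_nat (Poly_Mapping.lookup m v))"
  by (subst pd_superset[of "{m}"]) auto

lemma pd_single_times_single:
  "pd v (Poly_Mapping.single m a * Poly_Mapping.single m' b) =
     pd v (Poly_Mapping.single m a) * Poly_Mapping.single m' b
     + Poly_Mapping.single m a * pd v (Poly_Mapping.single m' b)"
proof -
  have shift: "(m - Poly_Mapping.single v 1) + m' = (m + m') - Poly_Mapping.single v 1"
    if "Poly_Mapping.lookup m v \<noteq> 0" for m m' :: "var \<Rightarrow>\<^sub>0 nat"
    using that by (intro poly_mapping_eqI) (auto simp: lookup_add lookup_minus lookup_single when_def)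
  show ?thesis
    using shift[of m m'] shift[of m' m]
    by (cases "Poly_Mapping.lookup m v = 0"; cases "Poly_Mapping.lookup m' v = 0")
      (simp_all add: pd_single mult_single lookup_add distrib_left single_add ac_simps)
qed

lemma pd_times: "pd v (f * g) = pd v f * g + f * pd v g"
proof (induction f rule: poly_mapping_induct)
  case (single k c)
  show ?case
    by (induction g rule: poly_mapping_induct)
      (simp_all add: pd_0 pd_add pd_single_times_single distrib_left distrib_right)
qed (simp_all add: pd_0 pd_add distrib_left distrib_right)

lemma pd_cvar: "pd a (cvar v) = (if a = v then 1 else 0)"
  by (auto simp: cvar_def pd_single lookup_single)

lemma cR_times:
  assumes "f \<in> cR n" "g \<in> cR n"
  shows "f * g \<in> cR n"
  unfolding cR_def
proof (intro CollectI ballI)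
  fix m v assume "m \<in> Poly_Mapping.keys (f * g)" and v: "v \<in> Poly_Mapping.keys m"
  then obtain a b where "m = a + b" "a \<in> Poly_Mapping.keys f" "b \<in> Poly_Mapping.keys g"
    using keys_mult[of f g] by auto
  with v keys_add[of a b] assms show "vidx v \<in> {1..n}"
    unfolding cR_def by blast
qed

lemma cR_add: "f \<in> cR n \<Longrightarrow> g \<in> cR n \<Longrightarrow> f + g \<in> cR n"
  unfolding cR_def using keys_add[of f g] by blast

lemma cR_uminus: "f \<in> cR n \<Longrightarrow> - f \<in> cR n"
  unfolding cR_def by simp

lemma cR_0: "0 \<in> cR n"
  unfolding cR_def by simp

lemma cR_1: "1 \<in> cR n"
  unfolding cR_def by simp

lemma cR_cconst: "cconst c \<in> cR n"
  unfolding cR_def cconst_def by simp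

lemma cR_cvar: "vidx v \<in> {1..n} \<Longrightarrow> cvar v \<in> cR n"
  unfolding cR_def cvar_def by simp

lemma cR_sum: "(\<And>x. x \<in> S \<Longrightarrow> f x \<in> cR n) \<Longrightarrow> sum f S \<in> cR n"
  by (induction S rule: infinite_finite_induct) (auto intro: cR_0 cR_add)

lemma cR_pd: "f \<in> cR n \<Longrightarrow> pd v f \<in> cR n"
  unfolding pd_def by (rule cR_sum) (auto simp: cR_def in_keys_iff lookup_minus)

lemma cR_gb: "vidx a \<in> {1..n} \<Longrightarrow> vidx b \<in> {1..n} \<Longrightarrow> gb q lam d a b \<in> cR n"
  by (cases a; cases b)
    (auto intro!: cR_times cR_cvar cR_cconst cR_uminus cR_add cR_1 cR_sum cR_0)

lemma finite_Vars [simp]: "finite (Vars n)"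
  unfolding Vars_def by simp

lemma vidx_Vars: "a \<in> Vars n \<Longrightarrow> vidx a \<in> {1..n}"
  unfolding Vars_def by auto

lemma cR_pbr: "f \<in> cR n \<Longrightarrow> g \<in> cR n \<Longrightarrow> pbr n q lam d f g \<in> cR n"
  unfolding pbr_def by (intro cR_sum cR_times cR_pd cR_gb vidx_Vars)

lemma pbr_add_left: "pbr n q lam d (f + g) h = pbr n q lam d f h + pbr n q lam d g h"
  unfolding pbr_def by (simp add: pd_add distrib_right sum.distrib)

lemma pbr_times_left: "pbr n q lam d (f * g) h = f * pbr n q lam d g h + g * pbr n q lam d f h"
proof -
  have "pbr n q lam d (f * g) h = (\<Sum>a\<in>Vars n. \<Sum>b\<in>Vars n.
          f * (pd a g * pd b h * gb q lam d a b) + g * (pd a f * pd b h * gb q lam d a b))"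
    unfolding pbr_def pd_times by (intro sum.cong refl) (simp add: algebra_simps)
  then show ?thesis
    unfolding pbr_def by (simp add: sum.distrib sum_distrib_left)
qed

lemma pbr_cvar_left: "v \<in> Vars n \<Longrightarrow> pbr n q lam d (cvar v) h = (\<Sum>b\<in>Vars n. pd b h * gb q lam d v b)"
proof -
  have "pbr n q lam d (cvar v) h
          = (\<Sum>a\<in>Vars n. if a = v then (\<Sum>b\<in>Vars n. pd b h * gb q lam d v b) else 0)"
    unfolding pbr_def by (intro sum.cong refl) (simp add: pd_cvar)
  then show "v \<in> Vars n \<Longrightarrow> ?thesis"
    by (simp add: sum.delta')
qed

lemma pbr_cvar_cvar: "v \<in> Vars n \<Longrightarrow> w \<in> Vars n \<Longrightarrow> pbr n q lam d (cvar v) (cvar w) = gb q lam d v w"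
proof -
  have "(\<Sum>b\<in>Vars n. pd b (cvar w) * gb q lam d v b) = (\<Sum>b\<in>Vars n. if b = w then gb q lam d v b else 0)"
    by (intro sum.cong refl) (simp add: pd_cvar)
  then show "v \<in> Vars n \<Longrightarrow> w \<in> Vars n \<Longrightarrow> ?thesis"
    by (simp add: pbr_cvar_left sum.delta')
qed

lemma c_idealD:
  assumes "c_ideal n I"
  shows c_ideal_subset: "I \<subseteq> cR n"
    and c_ideal_0: "0 \<in> I"
    and c_ideal_add: "a \<in> I \<Longrightarrow> b \<in> I \<Longrightarrow> a + b \<in> I"
    and c_ideal_uminus: "a \<in> I \<Longrightarrow> - a \<in> I"
    and c_ideal_left: "r \<in> cR n \<Longrightarrow> a \<in> I \<Longrightarrow> r * a \<in> I"
    and c_ideal_right: "r \<in> cR n \<Longrightarrow> a \<in> I \<Longrightarrow> a * r \<in> I"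
  using assms unfolding c_ideal_def by (auto simp: mult.commute)

lemma c_ideal_diff: "c_ideal n I \<Longrightarrow> a \<in> I \<Longrightarrow> b \<in> I \<Longrightarrow> a - b \<in> I"
  by (metis c_ideal_add c_ideal_uminus diff_conv_add_uminus)

lemma c_ideal_sum: "c_ideal n I \<Longrightarrow> (\<And>x. x \<in> S \<Longrightarrow> f x \<in> I) \<Longrightarrow> sum f S \<in> I"
  by (induction S rule: infinite_finite_induct) (auto intro: c_ideal_0 c_ideal_add)

lemma cconst_times: "cconst a * cconst b = cconst (a * b)"
  by (simp add: cconst_def mult_single)

lemma cconst_1: "cconst 1 = 1"
  by (simp add: cconst_def)

lemma c_ideal_cconst_cancel: "c_ideal n I \<Longrightarrow> c \<noteq> 0 \<Longrightarrow> cconst c * a \<in> I \<Longrightarrow> a \<in> I"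
  using c_ideal_left[OF _ cR_cconst, of n I "cconst c * a" "inverse c"]
  by (simp add: mult.assoc[symmetric] cconst_times cconst_1)

section \<open>Poisson prime ideals of A_1\<close>

definition adjoin_cvar :: "nat \<Rightarrow> cpoly set \<Rightarrow> var \<Rightarrow> cpoly set" where
  "adjoin_cvar n P v = {p + cvar v * r | p r. p \<in> P \<and> r \<in> cR n}"

lemma adjoin_cvarI: "p \<in> P \<Longrightarrow> r \<in> cR n \<Longrightarrow> p + cvar v * r \<in> adjoin_cvar n P v"
  unfolding adjoin_cvar_def by blast

lemma subset_adjoin_cvar: "P \<subseteq> adjoin_cvar n P v"
  using adjoin_cvarI[OF _ cR_0] by fastforce

lemma cvar_in_adjoin_cvar: "c_ideal n P \<Longrightarrow> cvar v \<in> adjoin_cvar n P v"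
  using adjoin_cvarI[OF c_ideal_0 cR_1] by fastforce

lemma c_ideal_adjoin_cvar:
  assumes P: "c_ideal n P" and v: "vidx v \<in> {1..n}"
  shows "c_ideal n (adjoin_cvar n P v)"
  unfolding c_ideal_def
proof (intro conjI ballI)
  show "adjoin_cvar n P v \<subseteq> cR n"
    unfolding adjoin_cvar_def using c_ideal_subset[OF P] cR_cvar[OF v] by (auto intro!: cR_add cR_times)
  show "0 \<in> adjoin_cvar n P v"
    using subset_adjoin_cvar c_ideal_0[OF P] by blast
next
  fix a assume "a \<in> adjoin_cvar n P v"
  then obtain p r where a: "a = p + cvar v * r" "p \<in> P" "r \<in> cR n"
    unfolding adjoin_cvar_def by blast
  show "- a \<in> adjoin_cvar n P v"
    using adjoin_cvarI[OF c_ideal_uminus[OF P a(2)] cR_uminus[OF a(3)]] a(1) by simp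
  fix b assume "b \<in> adjoin_cvar n P v"
  then obtain p' r' where b: "b = p' + cvar v * r'" "p' \<in> P" "r' \<in> cR n"
    unfolding adjoin_cvar_def by blast
  show "a + b \<in> adjoin_cvar n P v"
    using adjoin_cvarI[OF c_ideal_add[OF P a(2) b(2)] cR_add[OF a(3) b(3)]] a(1) b(1)
    by (simp add: algebra_simps)
next
  fix s a assume s: "s \<in> cR n" and "a \<in> adjoin_cvar n P v"
  then obtain p r where a: "a = p + cvar v * r" "p \<in> P" "r \<in> cR n"
    unfolding adjoin_cvar_def by blast
  show "s * a \<in> adjoin_cvar n P v"
    using adjoin_cvarI[OF c_ideal_left[OF P s a(2)] cR_times[OF s a(3)]] a(1)
    by (simp add: algebra_simps)
qed

lemma poisson_ideal_adjoin_cvar: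
  assumes P: "poisson_ideal n q lam d P" and v: "v \<in> Vars n"
    and brackets: "\<forall>b\<in>Vars n. gb q lam d v b \<in> adjoin_cvar n P v"
  shows "poisson_ideal n q lam d (adjoin_cvar n P v)"
  unfolding poisson_ideal_def
proof (intro conjI ballI)
  have cP: "c_ideal n P"
    using P unfolding poisson_ideal_def by blast
  show K: "c_ideal n (adjoin_cvar n P v)"
    using c_ideal_adjoin_cvar[OF cP vidx_Vars[OF v]] .
  fix a f assume "a \<in> adjoin_cvar n P v" and f: "f \<in> cR n"
  then obtain p r where a: "a = p + cvar v * r" "p \<in> P" "r \<in> cR n"
    unfolding adjoin_cvar_def by blast
  have "pbr n q lam d p f \<in> adjoin_cvar n P v"
    using P a(2) f subset_adjoin_cvar unfolding poisson_ideal_def by blast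
  moreover have "cvar v * pbr n q lam d r f \<in> adjoin_cvar n P v"
    using c_ideal_right[OF K cR_pbr[OF a(3) f] cvar_in_adjoin_cvar[OF cP]] .
  moreover have "pbr n q lam d (cvar v) f \<in> adjoin_cvar n P v"
    unfolding pbr_cvar_left[OF v]
    using brackets cR_pd[OF f] by (intro c_ideal_sum[OF K] c_ideal_left[OF K]) auto
  ultimately show "pbr n q lam d a f \<in> adjoin_cvar n P v"
    unfolding a(1) pbr_add_left pbr_times_left
    using c_ideal_left[OF K a(3)] c_ideal_add[OF K] by blast
qed

lemma adjoin_cvar_times:
  assumes P: "c_ideal n P" and u: "vidx u \<in> {1..n}" and v: "vidx v \<in> {1..n}"
    and a: "a \<in> adjoin_cvar n P u" and b: "b \<in> adjoin_cvar n P v"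
    and uv: "cvar u * cvar v \<in> P"
  shows "a * b \<in> P"
proof -
  obtain p r where pr: "a = p + cvar u * r" "p \<in> P" "r \<in> cR n"
    using a unfolding adjoin_cvar_def by blast
  obtain p' r' where pr': "b = p' + cvar v * r'" "p' \<in> P" "r' \<in> cR n"
    using b unfolding adjoin_cvar_def by blast
  have "a * b = p * b + (cvar u * r) * p' + (cvar u * cvar v) * (r * r')"
    unfolding pr(1) pr'(1) by (simp add: algebra_simps)
  moreover have "b \<in> cR n"
    using b c_ideal_subset[OF c_ideal_adjoin_cvar[OF P v]] by blast
  then have "p * b \<in> P"
    using c_ideal_right[OF P _ pr(2)] by blast
  moreover have "(cvar u * r) * p' \<in> P"
    using c_ideal_left[OF P cR_times[OF cR_cvar[OF u] pr(3)] pr'(2)] .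
  moreover have "(cvar u * cvar v) * (r * r') \<in> P"
    using c_ideal_right[OF P cR_times[OF pr(3) pr'(3)] uv] .
  ultimately show ?thesis
    using c_ideal_add[OF P] by simp
qed

lemma gb_in_ideal_of_cvar:
  assumes K: "c_ideal n K" and a: "cvar a \<in> K"
    and ab: "vidx a \<in> {1..n}" "vidx b \<in> {1..n}" and "vidx b \<noteq> vidx a \<or> b = a"
  shows "gb q lam d a b \<in> K"
proof -
  have left: "s * g \<in> K" "- (s * g) \<in> K" if "s \<in> cR n" "g \<in> K" for s g
    using c_ideal_left[OF K that] c_ideal_uminus[OF K] by blast+
  have both: "s * g * t \<in> K" "- (s * g * t) \<in> K" if "s \<in> cR n" "t \<in> cR n" "g \<in> K" for s g t
    using c_ideal_right[OF K that(2) left(1)[OF that(1,3)]] c_ideal_uminus[OF K] by blast+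
  show ?thesis
    using assms(5) ab a c_ideal_0[OF K]
    by (cases a; cases b) (auto, (fastforce intro: left both cR_times cR_cconst cR_cvar)+)
qed

lemma cz_eq: "1 \<le> i \<Longrightarrow> cz i = cz (i - 1) + cvar (Y i) * cvar (X i)"
  unfolding cz_def by (cases i) (simp_all add: add.assoc)

lemma gb_Y_X: "gb q lam d (Y i) (X i) = - (cconst (d (q i)) * cz i)"
  by (simp add: cz_def)

lemma gb_X_Y: "gb q lam d (X i) (Y i) = cconst (d (q i)) * cz i"
  by (simp add: cz_def)

lemma gb_in_adjoin_cvar:
  assumes P: "c_ideal n P" and v: "v \<in> Vars n" and b: "b \<in> Vars n"
    and partner: "\<And>w. vidx w = vidx v \<Longrightarrow> w \<noteq> v \<Longrightarrow> gb q lam d v w \<in> P"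
  shows "gb q lam d v b \<in> adjoin_cvar n P v"
proof (cases "vidx b = vidx v \<and> b \<noteq> v")
  case True
  then show ?thesis
    using partner subset_adjoin_cvar by blast
next
  case False
  then show ?thesis
    using gb_in_ideal_of_cvar[OF c_ideal_adjoin_cvar[OF P] cvar_in_adjoin_cvar[OF P]] v b vidx_Vars
    by metis
qed

lemma poisson_prime_gen_iff_cz:
  assumes P: "poisson_prime n q lam d P" and dq: "d (q i) \<noteq> 0" and i: "i \<in> {1..n}"
  shows "cvar (Y i) \<in> P \<or> cvar (X i) \<in> P \<longleftrightarrow> cz i \<in> P \<and> cz (i - 1) \<in> P"
proof -
  have PI: "poisson_ideal n q lam d P"
    using P unfolding poisson_prime_def by blast
  then have cP: "c_ideal n P"
    unfolding poisson_ideal_def by blast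
  have vars: "Y i \<in> Vars n" "X i \<in> Vars n"
    using i unfolding Vars_def by auto
  have y: "cvar (Y i) \<in> cR n" and x: "cvar (X i) \<in> cR n"
    using i by (simp_all add: cR_cvar)
  have z: "cz i = cz (i - 1) + cvar (Y i) * cvar (X i)"
    using i by (simp add: cz_eq)
  show ?thesis
  proof
    assume yx_P: "cvar (Y i) \<in> P \<or> cvar (X i) \<in> P"
    then have yx: "cvar (Y i) * cvar (X i) \<in> P"
      using c_ideal_left[OF cP y] c_ideal_right[OF cP x] by blast
    from yx_P have "cconst (d (q i)) * cz i \<in> P"
    proof
      assume "cvar (Y i) \<in> P"
      then have "gb q lam d (Y i) (X i) \<in> P"
        using PI x pbr_cvar_cvar[OF vars] unfolding poisson_ideal_def by metis
      then show ?thesis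
        using c_ideal_uminus[OF cP] unfolding gb_Y_X by force
    next
      assume "cvar (X i) \<in> P"
      then have "gb q lam d (X i) (Y i) \<in> P"
        using PI y pbr_cvar_cvar[OF vars(2,1)] unfolding poisson_ideal_def by metis
      then show ?thesis
        unfolding gb_X_Y .
    qed
    then have "cz i \<in> P"
      using c_ideal_cconst_cancel[OF cP dq] by blast
    then show "cz i \<in> P \<and> cz (i - 1) \<in> P"
      using c_ideal_diff[OF cP _ yx, of "cz i"] z by simp
  next
    assume "cz i \<in> P \<and> cz (i - 1) \<in> P"
    then have yx: "cvar (Y i) * cvar (X i) \<in> P" and dz: "cconst (d (q i)) * cz i \<in> P"
      using z c_ideal_diff[OF cP, of "cz i" "cz (i - 1)"] c_ideal_left[OF cP cR_cconst] by auto
    have partner_Y: "gb q lam d (Y i) w \<in> P" if "vidx w = vidx (Y i)" "w \<noteq> Y i" for w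
    proof -
      from that have "w = X i" by (cases w) auto
      then show ?thesis
        using c_ideal_uminus[OF cP dz] by (simp only: gb_Y_X)
    qed
    have partner_X: "gb q lam d (X i) w \<in> P" if "vidx w = vidx (X i)" "w \<noteq> X i" for w
    proof -
      from that have "w = Y i" by (cases w) auto
      then show ?thesis
        using dz by (simp only: gb_X_Y)
    qed
    have "poisson_ideal n q lam d (adjoin_cvar n P (Y i))"
      by (rule poisson_ideal_adjoin_cvar[OF PI vars(1)])
        (use gb_in_adjoin_cvar[OF cP vars(1) _ partner_Y] in blast)
    moreover have "poisson_ideal n q lam d (adjoin_cvar n P (X i))"
      by (rule poisson_ideal_adjoin_cvar[OF PI vars(2)])
        (use gb_in_adjoin_cvar[OF cP vars(2) _ partner_X] in blast)
    moreover have "\<forall>a\<in>adjoin_cvar n P (Y i). \<forall>b\<in>adjoin_cvar n P (X i). a * b \<in> P"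
      using adjoin_cvar_times[OF cP _ _ _ _ yx] i by simp
    ultimately have "adjoin_cvar n P (Y i) \<subseteq> P \<or> adjoin_cvar n P (X i) \<subseteq> P"
      using P unfolding poisson_prime_def by blast
    then show "cvar (Y i) \<in> P \<or> cvar (X i) \<in> P"
      using cvar_in_adjoin_cvar[OF cP] by blast
  qed
qed

lemma poisson_prime_trace_admissible:
  assumes "poisson_prime n q lam d P" and "\<forall>i\<in>{1..n}. d (q i) \<noteq> 0"
  shows "admissible n (c_trace n P)"
  unfolding c_trace_def
  by (rule admissible_traceI) (use poisson_prime_gen_iff_cz[OF assms(1)] assms(2) in auto)

lemma d_q_nonzero:
  assumes q_ok: "\<forall>i\<in>{1..n}. q i \<noteq> 0 \<and> q i \<noteq> 1"
    and eta_basis: "\<forall>g\<in>GQL n q lam. \<exists>!s::nat \<Rightarrow> int. (\<forall>i\<ge>r. s i = 0) \<and> g = (\<Prod>i<r. eta i powi s i)"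
    and mu_indep: "\<forall>c::nat \<Rightarrow> rat. (\<Sum>i<r. of_rat (c i) * mu i) = 0 \<longrightarrow> (\<forall>i<r. c i = 0)"
    and d_def: "\<forall>s::nat \<Rightarrow> int. d (\<Prod>i<r. eta i powi s i) = (\<Sum>i<r. of_int (s i) * mu i)"
    and i: "i \<in> {1..n}"
  shows "d (q i) \<noteq> 0"
proof
  assume d0: "d (q i) = 0"
  have "q i \<in> GQL n q lam"
    unfolding GQL_def using i by (intro grp_gen.gen) blast
  then obtain s :: "nat \<Rightarrow> int" where s: "q i = (\<Prod>k<r. eta k powi s k)"
    using eta_basis by blast
  have "(\<Sum>k<r. of_rat (of_int (s k)) * mu k) = d (q i)"
    using d_def s by (simp add: of_rat_of_int_eq)
  then have "\<forall>k<r. s k = 0"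
    using mu_indep[rule_format, of "\<lambda>k. of_int (s k)"] d0 by simp
  then have "q i = 1"
    using s by simp
  with q_ok i show False
    by blast
qed

theorem lemma2p14:
  fixes n r :: nat and q :: "nat \<Rightarrow> complex" and lam :: "nat \<Rightarrow> nat \<Rightarrow> complex"
    and eta mu :: "nat \<Rightarrow> complex" and d :: "complex \<Rightarrow> complex"
  assumes n1: "n \<ge> 1"
    and q_ok: "\<forall>i\<in>{1..n}. q i \<noteq> 0 \<and> q i \<noteq> 1"
    and lam_nz: "\<forall>i\<in>{1..n}. \<forall>j\<in>{1..n}. lam i j \<noteq> 0"
    and lam_diag: "\<forall>i\<in>{1..n}. lam i i = 1"
    and lam_inv: "\<forall>i\<in>{1..n}. \<forall>j\<in>{1..n}. lam i j = inverse (lam j i)"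
    and torsion_free: "\<forall>g\<in>GQL n q lam. \<forall>k::nat. k > 0 \<longrightarrow> g ^ k = 1 \<longrightarrow> g = 1"
    and eta_in: "\<forall>i<r. eta i \<in> GQL n q lam"
    and eta_basis: "\<forall>g\<in>GQL n q lam. \<exists>!s::nat \<Rightarrow> int. (\<forall>i\<ge>r. s i = 0) \<and> g = (\<Prod>i<r. eta i powi s i)"
    and mu_indep: "\<forall>c::nat \<Rightarrow> rat. (\<Sum>i<r. of_rat (c i) * mu i) = 0 \<longrightarrow> (\<forall>i<r. c i = 0)"
    and d_def: "\<forall>s::nat \<Rightarrow> int. d (\<Prod>i<r. eta i powi s i) = (\<Sum>i<r. of_int (s i) * mu i)"
  shows "(\<forall>P. Aq_prime n q lam P \<longrightarrow> admissible n (nc_trace n P))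
       \<and> (\<forall>P. poisson_prime n q lam d P \<longrightarrow> admissible n (c_trace n P))"
proof (intro conjI allI impI)
  fix P assume "Aq_prime n q lam P"
  then show "admissible n (nc_trace n P)"
    using Aq_prime_trace_admissible q_ok lam_nz by blast
next
  fix P assume "poisson_prime n q lam d P"
  moreover have "\<forall>i\<in>{1..n}. d (q i) \<noteq> 0"
    using d_q_nonzero[OF q_ok eta_basis mu_indep d_def] by blast
  ultimately show "admissible n (c_trace n P)"
    using poisson_prime_trace_admissible by blast
qed

end
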